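(* Let $u$ be a weak solution of the two-phase problem in $\Omega$. Then $u^-=\min\{u,0\}$ is a weak solution of the one-phase problem $\Delta w=0$ in $\{w<0\}$, $|\nabla w|^2=(x_2^0-x_2)^+$ on $\partial\{w<0\}$, in $\Omega\cap\{u\le0\}$.
   Context: Let $\Omega\subset\mathbb{R}^2$ be open and $x_2^0\in\mathbb{R}$ a constant; $\chi_A$ denotes the characteristic function of $A$. A weak solution of the two-phase problem is $u\in W^{1,2}(\Omega)$ with: (i) $u\in C(\Omega)\cap C^2(\Omega\cap\{u\ne0\})$; (ii) for every $\phi=(\phi_1,\phi_2)\in C^1_0(\Omega;\mathbb{R}^2)$, $0=\int_\Omega(|\nabla u|^2\mathrm{div}\phi-2\nabla u\,D\phi\,\nabla u)dx+\int_{\Omega\cap\{x_2<x_2^0\}}((x_2^0-x_2)\chi_{\{u<0\}}\mathrm{div}\phi-\chi_{\{u<0\}}\phi_2)dx+\int_{\Omega\cap\{x_2>x_2^0\}}((x_2-x_2^0)\chi_{\{u>0\}}\mathrm{div}\phi+\chi_{\{u>0\}}\phi_2)dx$; (iii) $\partial\{u<0\}\cap\Omega$ is locally a $C^{2,\alpha}$ curve. A weak solution of the one-phase problem in a domain $U$ is a non-positive $w\in W^{1,2}(U)$ with: (i) $w\in C(U)\cap C^2(U\cap\{w<0\})$; (ii) for every $\phi\in C^1_0(U;\mathbb{R}^2)$, $0=\int_U(|\nabla w|^2\mathrm{div}\phi-2\nabla w\,D\phi\,\nabla w)dx+\int_{U\cap\{x_2<x_2^0\}}((x_2^0-x_2)\chi_{\{w<0\}}\mathrm{div}\phi-\chi_{\{w<0\}}\phi_2)dx$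 (vanishing first domain variation of $\int(|\nabla v|^2+(x_2^0-x_2)^+\chi_{\{v<0\}})dx$); (iii) $\partial\{w<0\}\cap U$ is locally a $C^{2,\alpha}$ curve. *)

theory Defs
  imports "HOL-Analysis.Analysis"
begin

definition pd :: "(real^2 \<Rightarrow> 'b::real_normed_vector) \<Rightarrow> 2 \<Rightarrow> real^2 \<Rightarrow> 'b" where
  "pd f j x = frechet_derivative f (at x) (axis j 1)"

definition C1c :: "(real^2) set \<Rightarrow> (real^2 \<Rightarrow> 'b::real_normed_vector) \<Rightarrow> bool" where
  "C1c U f \<longleftrightarrow> (\<forall>x. f differentiable (at x)) \<and> (\<forall>j. continuous_on UNIV (pd f j)) \<and>
     compact (closure {x. f x \<noteq> 0}) \<and> closure {x. f x \<noteq> 0} \<subseteq> U"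

definition divg :: "(real^2 \<Rightarrow> real^2) \<Rightarrow> real^2 \<Rightarrow> real" where
  "divg \<phi> x = (\<Sum>i\<in>UNIV. pd \<phi> i x $ i)"

definition quadD :: "real^2 \<Rightarrow> (real^2 \<Rightarrow> real^2) \<Rightarrow> real^2 \<Rightarrow> real" where
  "quadD p \<phi> x = (\<Sum>i\<in>UNIV. \<Sum>j\<in>UNIV. p $ i * (pd \<phi> j x $ i) * p $ j)"

definition weak_gradient :: "(real^2) set \<Rightarrow> (real^2 \<Rightarrow> real) \<Rightarrow> (real^2 \<Rightarrow> real^2) \<Rightarrow> bool" where
  "weak_gradient U u g \<longleftrightarrow>
     set_borel_measurable lebesgue U u \<and> set_integrable lebesgue U (\<lambda>x. (u x)\<^sup>2) \<and>
     (\<forall>i. set_borel_measurable lebesgue U (\<lambda>x. g x $ i) \<and> set_integrable lebesgue U (\<lambda>x. (g x $ i)\<^sup>2)) \<and>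
     (\<forall>\<psi>::real^2 \<Rightarrow> real. C1c U \<psi> \<longrightarrow>
        (\<forall>i. (LINT x:U|lebesgue. u x * pd \<psi> i x) = - (LINT x:U|lebesgue. g x $ i * \<psi> x)))"

definition W12 :: "(real^2) set \<Rightarrow> (real^2 \<Rightarrow> real) \<Rightarrow> bool" where
  "W12 U u \<longleftrightarrow> (\<exists>g. weak_gradient U u g)"

definition C2_on :: "(real^2) set \<Rightarrow> (real^2 \<Rightarrow> real) \<Rightarrow> bool" where
  "C2_on S f \<longleftrightarrow> (\<forall>x\<in>S. f differentiable (at x)) \<and> (\<forall>j. \<forall>x\<in>S. pd f j differentiable (at x)) \<and>
     (\<forall>j k. continuous_on S (pd (pd f j) k))"

definition locally_C2alpha_curve :: "real \<Rightarrow> (real^2) set \<Rightarrow> (real^2) set \<Rightarrow> bool" where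
  "locally_C2alpha_curve \<alpha> U \<Gamma> \<longleftrightarrow>
    (\<forall>x0\<in>\<Gamma> \<inter> U. \<exists>r>0. \<exists>\<theta>::real. \<exists>g g1 g2 :: real \<Rightarrow> real.
       (\<forall>t. (g has_real_derivative g1 t) (at t)) \<and> (\<forall>t. (g1 has_real_derivative g2 t) (at t)) \<and>
       continuous_on UNIV g2 \<and>
       (let e1 = vector [cos \<theta>, sin \<theta>] :: real^2; e2 = vector [- sin \<theta>, cos \<theta>] :: real^2 in
         (\<exists>C. \<forall>s\<in>{x0 \<bullet> e1 - r .. x0 \<bullet> e1 + r}. \<forall>t\<in>{x0 \<bullet> e1 - r .. x0 \<bullet> e1 + r}.
              \<bar>g2 s - g2 t\<bar> \<le> C * \<bar>s - t\<bar> powr \<alpha>) \<and>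
         \<Gamma> \<inter> U \<inter> ball x0 r = {x \<in> ball x0 r. x \<bullet> e2 = g (x \<bullet> e1)}))"

definition two_phase_weak_solution :: "real \<Rightarrow> real \<Rightarrow> (real^2) set \<Rightarrow> (real^2 \<Rightarrow> real) \<Rightarrow> bool" where
  "two_phase_weak_solution \<alpha> x20 \<Omega> u \<longleftrightarrow>
     W12 \<Omega> u \<and>
     continuous_on \<Omega> u \<and> C2_on (\<Omega> \<inter> {x. u x \<noteq> 0}) u \<and>
     (\<exists>g. weak_gradient \<Omega> u g \<and>
       (\<forall>\<phi>::real^2 \<Rightarrow> real^2. C1c \<Omega> \<phi> \<longrightarrow>
          0 = (LINT x:\<Omega>|lebesgue. (norm (g x))\<^sup>2 * divg \<phi> x - 2 * quadD (g x) \<phi> x)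
            + (LINT x:(\<Omega> \<inter> {x. x $ 2 < x20})|lebesgue.
                 (x20 - x $ 2) * indicator {x. u x < 0} x * divg \<phi> x - indicator {x. u x < 0} x * \<phi> x $ 2)
            + (LINT x:(\<Omega> \<inter> {x. x $ 2 > x20})|lebesgue.
                 (x $ 2 - x20) * indicator {x. u x > 0} x * divg \<phi> x + indicator {x. u x > 0} x * \<phi> x $ 2))) \<and>
     locally_C2alpha_curve \<alpha> \<Omega> (frontier {x. u x < 0})"

definition one_phase_weak_solution :: "real \<Rightarrow> real \<Rightarrow> (real^2) set \<Rightarrow> (real^2 \<Rightarrow> real) \<Rightarrow> bool" where
  "one_phase_weak_solution \<alpha> x20 U w \<longleftrightarrow>
     (\<forall>x\<in>U. w x \<le> 0) \<and> W12 U w \<and>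
     continuous_on U w \<and> C2_on (U \<inter> {x. w x < 0}) w \<and>
     (\<exists>g. weak_gradient U w g \<and>
       (\<forall>\<phi>::real^2 \<Rightarrow> real^2. C1c U \<phi> \<longrightarrow>
          0 = (LINT x:U|lebesgue. (norm (g x))\<^sup>2 * divg \<phi> x - 2 * quadD (g x) \<phi> x)
            + (LINT x:(U \<inter> {x. x $ 2 < x20})|lebesgue.
                 (x20 - x $ 2) * indicator {x. w x < 0} x * divg \<phi> x - indicator {x. w x < 0} x * \<phi> x $ 2))) \<and>
     locally_C2alpha_curve \<alpha> U (frontier {x. w x < 0})"

end

theory Submission
  imports Defs
begin

text \<open>A test field supported in \<open>\<Omega> \<inter> {u \<le> 0}\<close> does not see the positive phase, so the
  positive-phase term of the first domain variation drops out, and the remaining terms are those of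
  the one-phase functional for \<open>u\<^sup>- = min u 0\<close>, which agrees with \<open>u\<close> on the support. Regularity
  and the free boundary carry over because \<open>{u\<^sup>- < 0} = {u < 0}\<close> is open and its frontier inside
  \<open>\<Omega>\<close> lies in \<open>{u \<le> 0}\<close>.\<close>

lemma has_derivative_at_cong_open:
  assumes "open S" "x \<in> S" "\<And>y. y \<in> S \<Longrightarrow> f y = g y"
  shows "(f has_derivative D) (at x) \<longleftrightarrow> (g has_derivative D) (at x)"
  using has_derivative_transform_within_open[OF _ assms(1,2)] assms(3) by metis

lemma differentiable_at_cong_open:
  assumes "open S" "x \<in> S" "\<And>y. y \<in> S \<Longrightarrow> f y = g y"
  shows "f differentiable (at x) \<longleftrightarrow> g differentiable (at x)"
  unfolding differentiable_def using has_derivative_at_cong_open[of S x f g] assms by blast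

lemma pd_cong_open:
  assumes "open S" "x \<in> S" "\<And>y. y \<in> S \<Longrightarrow> f y = g y"
  shows "pd f j x = pd g j x"
  unfolding pd_def frechet_derivative_def using has_derivative_at_cong_open[of S x f g] assms by simp

lemma pd_eq_0_outside_support:
  fixes f :: "real^2 \<Rightarrow> 'b::real_normed_vector"
  assumes "x \<notin> closure {y. f y \<noteq> 0}"
  shows "pd f j x = 0"
proof -
  have "pd f j x = pd (\<lambda>_. 0::'b) j x"
    by (rule pd_cong_open[of "- closure {y. f y \<noteq> 0}"])
       (use assms closure_subset[of "{y. f y \<noteq> 0}"] in blast)+
  also have "\<dots> = 0"
    unfolding pd_def by (simp flip: frechet_derivative_at[OF has_derivative_const])
  finally show ?thesis .
qed

lemma C2_on_subset: "C2_on S f \<Longrightarrow> T \<subseteq> S \<Longrightarrow> C2_on T f"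
  unfolding C2_on_def by (meson continuous_on_subset subsetD)

lemma C2_on_cong_open:
  assumes "open S" "\<And>x. x \<in> S \<Longrightarrow> f x = g x"
  shows "C2_on S f \<longleftrightarrow> C2_on S g"
proof -
  have pd_eq: "pd f j x = pd g j x" if "x \<in> S" for j x
    using pd_cong_open[OF assms(1) that assms(2)] .
  have "f differentiable (at x) \<longleftrightarrow> g differentiable (at x)" if "x \<in> S" for x
    by (rule differentiable_at_cong_open[OF assms(1) that assms(2)])
  moreover have "pd f j differentiable (at x) \<longleftrightarrow> pd g j differentiable (at x)" if "x \<in> S" for j x
    by (rule differentiable_at_cong_open[OF assms(1) that pd_eq])
  moreover have "continuous_on S (pd (pd f j) k) \<longleftrightarrow> continuous_on S (pd (pd g j) k)" for j k
    by (rule continuous_on_cong[OF refl pd_cong_open[OF assms(1) _ pd_eq]])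
  ultimately show ?thesis
    unfolding C2_on_def by blast
qed

lemma C2_on_negative_part:
  assumes "open \<Omega>" "continuous_on \<Omega> u" "C2_on (\<Omega> \<inter> {x. u x \<noteq> 0}) u"
  shows "C2_on (\<Omega> \<inter> {x. u x \<le> 0} \<inter> {x. min (u x) 0 < 0}) (\<lambda>x. min (u x) 0)"
proof -
  have negative_set: "\<Omega> \<inter> {x. u x \<le> 0} \<inter> {x. min (u x) 0 < 0} = \<Omega> \<inter> {x. u x < 0}"
    by auto
  have "open (\<Omega> \<inter> {x. u x < 0})"
    using continuous_open_preimage[OF assms(2,1) open_lessThan, of 0] by (simp add: vimage_def Int_def)
  moreover have "C2_on (\<Omega> \<inter> {x. u x < 0}) u"
    by (rule C2_on_subset[OF assms(3)]) auto
  ultimately show ?thesis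
    unfolding negative_set using C2_on_cong_open[of "\<Omega> \<inter> {x. u x < 0}" "\<lambda>x. min (u x) 0" u] by simp
qed

lemma C1c_mono: "C1c U \<phi> \<Longrightarrow> U \<subseteq> V \<Longrightarrow> C1c V \<phi>"
  unfolding C1c_def by auto

lemma C1c_eq_0_outside:
  assumes "C1c U \<phi>" "x \<notin> U"
  shows "\<phi> x = 0" and "pd \<phi> j x = 0"
proof -
  have "x \<notin> closure {y. \<phi> y \<noteq> 0}"
    using assms unfolding C1c_def by auto
  then show "\<phi> x = 0" and "pd \<phi> j x = 0"
    using closure_subset[of "{y. \<phi> y \<noteq> 0}"] pd_eq_0_outside_support by blast+
qed

lemma C1c_divg_quadD_eq_0_outside:
  assumes "C1c U \<phi>" "x \<notin> U"
  shows "divg \<phi> x = 0" and "quadD p \<phi> x = 0"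
  unfolding divg_def quadD_def using C1c_eq_0_outside(2)[OF assms] by auto

lemma set_integral_eq_subset:
  assumes "U \<subseteq> \<Omega>" "\<And>x. x \<in> \<Omega> \<Longrightarrow> x \<notin> U \<Longrightarrow> f x = 0"
  shows "(LINT x:\<Omega>|M. f x) = (LINT x:U|M. f x)"
  unfolding set_lebesgue_integral_def
  by (rule Bochner_Integration.integral_cong) (use assms in \<open>auto simp: indicator_def\<close>)

lemma sets_lebesgue_Int_sublevel:
  fixes u :: "'a::euclidean_space \<Rightarrow> real"
  assumes "set_borel_measurable lebesgue \<Omega> u" "\<Omega> \<in> sets lebesgue"
  shows "\<Omega> \<inter> {x. u x \<le> c} \<in> sets lebesgue"
  using set_borel_measurable_sets[of lebesgue \<Omega> u "{..c}"] assms
  by (simp add: vimage_def Int_def conj_commute)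

lemma weak_gradient_restrict:
  assumes wg: "weak_gradient \<Omega> u g" and "U \<in> sets lebesgue" "U \<subseteq> \<Omega>"
    and w_eq_u: "\<And>x. x \<in> U \<Longrightarrow> w x = u x"
  shows "weak_gradient U w g"
  unfolding weak_gradient_def
proof (intro conjI allI impI)
  have "set_borel_measurable lebesgue U u"
    using set_borel_measurable_subset[OF _ assms(2,3)] wg unfolding weak_gradient_def by blast
  moreover have "(\<lambda>x. indicator U x *\<^sub>R w x) = (\<lambda>x. indicator U x *\<^sub>R u x)"
    using w_eq_u by (auto simp: fun_eq_iff indicator_def)
  ultimately show "set_borel_measurable lebesgue U w"
    by (simp add: set_borel_measurable_def)
  have "set_integrable lebesgue U (\<lambda>x. (u x)\<^sup>2)"
    using set_integrable_subset[OF _ assms(2,3)] wg unfolding weak_gradient_def by blast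
  then show "set_integrable lebesgue U (\<lambda>x. (w x)\<^sup>2)"
    using set_integrable_cong[OF refl refl, of U "\<lambda>x. (w x)\<^sup>2" "\<lambda>x. (u x)\<^sup>2"] w_eq_u by simp
  show "set_borel_measurable lebesgue U (\<lambda>x. g x $ i)" for i
    using set_borel_measurable_subset[OF _ assms(2,3)] wg unfolding weak_gradient_def by blast
  show "set_integrable lebesgue U (\<lambda>x. (g x $ i)\<^sup>2)" for i
    using set_integrable_subset[OF _ assms(2,3)] wg unfolding weak_gradient_def by blast
next
  fix \<psi> :: "real^2 \<Rightarrow> real" and i
  assume \<psi>: "C1c U \<psi>"
  have "(LINT x:U|lebesgue. w x * pd \<psi> i x) = (LINT x:U|lebesgue. u x * pd \<psi> i x)"
    by (rule set_lebesgue_integral_cong[OF \<open>U \<in> sets lebesgue\<close>]) (simp add: w_eq_u)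
  also have "\<dots> = (LINT x:\<Omega>|lebesgue. u x * pd \<psi> i x)"
    using set_integral_eq_subset[OF \<open>U \<subseteq> \<Omega>\<close>, of "\<lambda>x. u x * pd \<psi> i x"] C1c_eq_0_outside(2)[OF \<psi>]
    by simp
  also have "\<dots> = - (LINT x:\<Omega>|lebesgue. g x $ i * \<psi> x)"
    using wg C1c_mono[OF \<psi> \<open>U \<subseteq> \<Omega>\<close>] unfolding weak_gradient_def by blast
  also have "\<dots> = - (LINT x:U|lebesgue. g x $ i * \<psi> x)"
    by (simp add: set_integral_eq_subset[OF \<open>U \<subseteq> \<Omega>\<close>] C1c_eq_0_outside(1)[OF \<psi>])
  finally show "(LINT x:U|lebesgue. w x * pd \<psi> i x) = - (LINT x:U|lebesgue. g x $ i * \<psi> x)" .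
qed

lemma closure_sublevel_Int_open_le:
  fixes u :: "'a::metric_space \<Rightarrow> real"
  assumes "open \<Omega>" "continuous_on \<Omega> u"
  shows "closure {x. u x < c} \<inter> \<Omega> \<subseteq> {x. u x \<le> c}"
proof (intro subsetI CollectI)
  fix x assume x: "x \<in> closure {x. u x < c} \<inter> \<Omega>"
  then obtain s where s: "\<And>n. u (s n) < c" "s \<longlonglongrightarrow> x"
    using closure_sequential[of x "{x. u x < c}"] by auto
  have "isCont u x"
    using assms x continuous_on_eq_continuous_at by blast
  then have "(\<lambda>n. u (s n)) \<longlonglongrightarrow> u x"
    using isCont_tendsto_compose s(2) by blast
  then show "u x \<le> c"
    by (rule LIMSEQ_le_const2) (use s(1) less_imp_le in blast)
qed

lemma locally_C2alpha_curve_cong: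
  "\<Gamma> \<inter> U = \<Gamma>' \<inter> U' \<Longrightarrow> locally_C2alpha_curve \<alpha> U \<Gamma> \<longleftrightarrow> locally_C2alpha_curve \<alpha> U' \<Gamma>'"
  unfolding locally_C2alpha_curve_def by (simp only:)

lemma locally_C2alpha_curve_negative_part:
  fixes u :: "real^2 \<Rightarrow> real"
  assumes "open \<Omega>" "continuous_on \<Omega> u" "locally_C2alpha_curve \<alpha> \<Omega> (frontier {x. u x < 0})"
  shows "locally_C2alpha_curve \<alpha> (\<Omega> \<inter> {x. u x \<le> 0}) (frontier {x. min (u x) 0 < 0})"
proof -
  have "frontier {x. min (u x) 0 < 0} \<inter> (\<Omega> \<inter> {x. u x \<le> 0}) = frontier {x. u x < 0} \<inter> \<Omega>"
    using closure_sublevel_Int_open_le[OF assms(1,2), of 0]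
    by (auto simp: frontier_def min_less_iff_disj)
  then show ?thesis
    using assms(3) locally_C2alpha_curve_cong by blast
qed

definition dirichlet_variation :: "(real^2) set \<Rightarrow> (real^2 \<Rightarrow> real^2) \<Rightarrow> (real^2 \<Rightarrow> real^2) \<Rightarrow> real" where
  "dirichlet_variation U g \<phi> = (LINT x:U|lebesgue. (norm (g x))\<^sup>2 * divg \<phi> x - 2 * quadD (g x) \<phi> x)"

definition negative_phase_variation ::
    "real \<Rightarrow> (real^2) set \<Rightarrow> (real^2 \<Rightarrow> real) \<Rightarrow> (real^2 \<Rightarrow> real^2) \<Rightarrow> real" where
  "negative_phase_variation x20 U v \<phi> = (LINT x:(U \<inter> {x. x $ 2 < x20})|lebesgue.
     (x20 - x $ 2) * indicator {x. v x < 0} x * divg \<phi> x - indicator {x. v x < 0} x * \<phi> x $ 2)"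

definition positive_phase_variation ::
    "real \<Rightarrow> (real^2) set \<Rightarrow> (real^2 \<Rightarrow> real) \<Rightarrow> (real^2 \<Rightarrow> real^2) \<Rightarrow> real" where
  "positive_phase_variation x20 U v \<phi> = (LINT x:(U \<inter> {x. x $ 2 > x20})|lebesgue.
     (x $ 2 - x20) * indicator {x. v x > 0} x * divg \<phi> x + indicator {x. v x > 0} x * \<phi> x $ 2)"

lemma two_phase_weak_solution_iff:
  "two_phase_weak_solution \<alpha> x20 \<Omega> u \<longleftrightarrow>
     W12 \<Omega> u \<and> continuous_on \<Omega> u \<and> C2_on (\<Omega> \<inter> {x. u x \<noteq> 0}) u \<and>
     (\<exists>g. weak_gradient \<Omega> u g \<and> (\<forall>\<phi>. C1c \<Omega> \<phi> \<longrightarrow>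
        dirichlet_variation \<Omega> g \<phi> + negative_phase_variation x20 \<Omega> u \<phi>
          + positive_phase_variation x20 \<Omega> u \<phi> = 0)) \<and>
     locally_C2alpha_curve \<alpha> \<Omega> (frontier {x. u x < 0})"
  unfolding two_phase_weak_solution_def dirichlet_variation_def negative_phase_variation_def
    positive_phase_variation_def
  by (simp add: eq_commute[of 0])

lemma one_phase_weak_solution_iff:
  "one_phase_weak_solution \<alpha> x20 U w \<longleftrightarrow>
     (\<forall>x\<in>U. w x \<le> 0) \<and> W12 U w \<and> continuous_on U w \<and> C2_on (U \<inter> {x. w x < 0}) w \<and>
     (\<exists>g. weak_gradient U w g \<and> (\<forall>\<phi>. C1c U \<phi> \<longrightarrow>
        dirichlet_variation U g \<phi> + negative_phase_variation x20 U w \<phi> = 0)) \<and>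
     locally_C2alpha_curve \<alpha> U (frontier {x. w x < 0})"
  unfolding one_phase_weak_solution_def dirichlet_variation_def negative_phase_variation_def
  by (simp add: eq_commute[of 0])

lemma dirichlet_variation_restrict:
  "C1c U \<phi> \<Longrightarrow> U \<subseteq> \<Omega> \<Longrightarrow> dirichlet_variation \<Omega> g \<phi> = dirichlet_variation U g \<phi>"
  unfolding dirichlet_variation_def
  by (rule set_integral_eq_subset) (simp_all add: C1c_divg_quadD_eq_0_outside)

lemma negative_phase_variation_restrict:
  assumes "C1c U \<phi>" "U \<subseteq> \<Omega>"
  shows "negative_phase_variation x20 \<Omega> v \<phi> = negative_phase_variation x20 U v \<phi>"
  unfolding negative_phase_variation_def
  by (rule set_integral_eq_subset)
     (use assms in \<open>auto simp: C1c_divg_quadD_eq_0_outside C1c_eq_0_outside\<close>)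

lemma positive_phase_variation_eq_0:
  assumes "C1c U \<phi>" "\<And>x. x \<in> U \<Longrightarrow> v x \<le> 0"
  shows "positive_phase_variation x20 \<Omega> v \<phi> = 0"
proof -
  have outside: "x \<notin> U" if "0 < v x" for x
    using assms(2) that by force
  have "positive_phase_variation x20 \<Omega> v \<phi> = positive_phase_variation x20 {} v \<phi>"
    unfolding positive_phase_variation_def
    by (rule set_integral_eq_subset)
       (use assms(1) in \<open>auto simp: C1c_divg_quadD_eq_0_outside C1c_eq_0_outside outside
          split: split_indicator\<close>)
  then show ?thesis
    by (simp add: positive_phase_variation_def set_lebesgue_integral_def)
qed

lemma first_variation_restrict_nonpositive:
  assumes "C1c U \<phi>" "U \<subseteq> \<Omega>" "\<And>x. x \<in> U \<Longrightarrow> u x \<le> 0"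
  shows "dirichlet_variation \<Omega> g \<phi> + negative_phase_variation x20 \<Omega> u \<phi>
           + positive_phase_variation x20 \<Omega> u \<phi>
         = dirichlet_variation U g \<phi> + negative_phase_variation x20 U (\<lambda>x. min (u x) 0) \<phi>"
proof -
  have "negative_phase_variation x20 U (\<lambda>x. min (u x) 0) \<phi> = negative_phase_variation x20 U u \<phi>"
    by (simp add: negative_phase_variation_def min_less_iff_disj)
  then show ?thesis
    using dirichlet_variation_restrict[OF assms(1,2)] negative_phase_variation_restrict[OF assms(1,2)]
      positive_phase_variation_eq_0[OF assms(1,3)]
    by simp
qed

theorem proposition2p1:
  fixes \<Omega> :: "(real^2) set" and u :: "real^2 \<Rightarrow> real" and x20 \<alpha> :: real
  assumes "open \<Omega>" and "0 < \<alpha>" and "\<alpha> < 1"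
    and "two_phase_weak_solution \<alpha> x20 \<Omega> u"
  shows "one_phase_weak_solution \<alpha> x20 (\<Omega> \<inter> {x. u x \<le> 0}) (\<lambda>x. min (u x) 0)"
proof -
  define U where "U = \<Omega> \<inter> {x. u x \<le> 0}"
  obtain g where u_cont: "continuous_on \<Omega> u" and u_C2: "C2_on (\<Omega> \<inter> {x. u x \<noteq> 0}) u"
    and u_grad: "weak_gradient \<Omega> u g"
    and variation: "\<And>\<phi>. C1c \<Omega> \<phi> \<Longrightarrow> dirichlet_variation \<Omega> g \<phi>
      + negative_phase_variation x20 \<Omega> u \<phi> + positive_phase_variation x20 \<Omega> u \<phi> = 0"
    and curve: "locally_C2alpha_curve \<alpha> \<Omega> (frontier {x. u x < 0})"
    using assms(4) unfolding two_phase_weak_solution_iff by blast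
  have "U \<subseteq> \<Omega>"
    unfolding U_def by blast
  have "U \<in> sets lebesgue"
    unfolding U_def using u_grad borel_open[OF assms(1)]
    by (intro sets_lebesgue_Int_sublevel) (simp_all add: weak_gradient_def)
  then have "weak_gradient U (\<lambda>x. min (u x) 0) g"
    using weak_gradient_restrict[OF u_grad _ \<open>U \<subseteq> \<Omega>\<close>] by (simp add: U_def)
  moreover have "dirichlet_variation U g \<phi> + negative_phase_variation x20 U (\<lambda>x. min (u x) 0) \<phi> = 0"
    if "C1c U \<phi>" for \<phi>
    using variation[OF C1c_mono[OF that \<open>U \<subseteq> \<Omega>\<close>]]
      first_variation_restrict_nonpositive[OF that \<open>U \<subseteq> \<Omega>\<close>] by (simp add: U_def)
  moreover have "continuous_on U (\<lambda>x. min (u x) 0)"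
    by (intro continuous_intros continuous_on_subset[OF u_cont \<open>U \<subseteq> \<Omega>\<close>])
  moreover have "\<forall>x\<in>U. min (u x) 0 \<le> 0"
    by simp
  ultimately show ?thesis
    using C2_on_negative_part[OF assms(1) u_cont u_C2]
      locally_C2alpha_curve_negative_part[OF assms(1) u_cont curve]
    unfolding one_phase_weak_solution_iff W12_def U_def[symmetric] by blast
qed

end
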